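(* Let $S\subset\mathbb N$, $r\ge2$ and $d\ge1$. If $E$ is a Bohr$_0$ set of dimension $d$ and $S$ is $2^dr$-large, then $S\cap E$ is $r$-large.
   Context: $\|t\|$ is the distance to the nearest integer. $E\subset\mathbb N$ is a Bohr$_0$ set if it contains a set $\{n\in\mathbb N:\|n\alpha_1\|<\varepsilon,\dots,\|n\alpha_k\|<\varepsilon\}$ for some $k\in\mathbb N$, $\alpha_1,\dots,\alpha_k\in\mathbb T$, $\varepsilon>0$; the least such $k$ is its dimension. For $m\ge2$, $R\subset\mathbb N$ is $m$-large if every coloring of $\mathbb N$ with $m$ colors contains arbitrarily long monochromatic arithmetic progressions with common difference in $R$. *)

theory Defs
  imports Complex_Main
begin

text \<open>Natural numbers are the positive integers; distance to nearest integer.\<close>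
definition dnint :: "real \<Rightarrow> real" where
  "dnint t = \<bar>t - of_int (round t)\<bar>"

definition bohr_nbhd :: "nat \<Rightarrow> (nat \<Rightarrow> real) \<Rightarrow> real \<Rightarrow> nat set" where
  "bohr_nbhd k alpha eps = {n. n \<ge> 1 \<and> (\<forall>i<k. dnint (real n * alpha i) < eps)}"

definition contains_bohr :: "nat set \<Rightarrow> nat \<Rightarrow> bool" where
  "contains_bohr E k \<longleftrightarrow> (\<exists>alpha eps. eps > 0 \<and> bohr_nbhd k alpha eps \<subseteq> E)"

definition bohr0_set :: "nat set \<Rightarrow> bool" where
  "bohr0_set E \<longleftrightarrow> (\<exists>k\<ge>1. contains_bohr E k)"

definition bohr0_dim :: "nat set \<Rightarrow> nat \<Rightarrow> bool" where
  "bohr0_dim E d \<longleftrightarrow> bohr0_set E \<and> d = (LEAST k. k \<ge> 1 \<and> contains_bohr E k)"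

definition large :: "nat \<Rightarrow> nat set \<Rightarrow> bool" where
  "large m R \<longleftrightarrow> (\<forall>c :: nat \<Rightarrow> nat. (\<forall>n\<ge>1. c n < m) \<longrightarrow>
     (\<forall>L. \<exists>a\<ge>1. \<exists>s\<in>R. \<forall>j<L. c (a + j * s) = c a))"

end

theory Submission
  imports Defs
begin

(* Let E contain the Bohr set B(alpha_1..alpha_d; eps).  Record, for each n,
   on which side of 1/2 the fractional part of n*alpha_i lies; this is a 2^d-colouring
   ("half code") of the integers.  Given an r-colouring c, the product of c with the half
   code is a 2^d*r-colouring, so the (2^d*r)-largeness of S yields an arbitrarily long
   progression a + j*s (s in S) that is monochromatic for both.  Along a progression of
   length N+1 on which frac(n*alpha) stays on one side of 1/2, every step of the
   fractional part equals t - round t with t = s*alpha, so N*||s*alpha|| < 1/2; taking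
   N >= 1/eps puts s into the Bohr set, hence into E. *)

lemma bohr0_dim_contains_bohr:
  assumes "bohr0_dim E d"
  shows "contains_bohr E d"
proof -
  from assms obtain k where "k \<ge> 1" "contains_bohr E k"
    and "d = (LEAST k. k \<ge> 1 \<and> contains_bohr E k)"
    unfolding bohr0_dim_def bohr0_set_def by auto
  then show ?thesis
    using LeastI[of "\<lambda>k. k \<ge> 1 \<and> contains_bohr E k" k] by auto
qed

text \<open>Refinement by an auxiliary colouring: if R is (m*r)-large, then for an r-colouring c
  and an m-colouring b there are arbitrarily long progressions with difference in R that
  are monochromatic for c and b simultaneously (apply largeness to c + r*b).\<close>
lemma large_product_colouring:
  fixes c b :: "nat \<Rightarrow> nat"
  assumes large: "large (m * r) R"
    and c: "\<forall>n\<ge>1. c n < r" and b: "\<forall>n\<ge>1. b n < m"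
  shows "\<exists>a\<ge>1. \<exists>s\<in>R. \<forall>j<L. c (a + j * s) = c a \<and> b (a + j * s) = b a"
proof -
  define cb where "cb n = c n + r * b n" for n
  have "cb n < m * r" if "n \<ge> 1" for n
  proof -
    have "c n < r" "b n + 1 \<le> m" using c b that by auto
    then have "c n + r * b n < r * (b n + 1)" "r * (b n + 1) \<le> r * m"
      by (simp_all only: mult_le_mono2) simp
    then show ?thesis unfolding cb_def by (simp only: mult.commute[of m r])
  qed
  with large obtain a s where a: "a \<ge> 1" and s: "s \<in> R"
    and mono: "\<forall>j<L. cb (a + j * s) = cb a"
    unfolding large_def by blast
  have "c (a + j * s) = c a \<and> b (a + j * s) = b a" if "j < L" for j
  proof -
    have small: "c (a + j * s) < r" "c a < r" using c a by auto
    have eq: "c (a + j * s) + r * b (a + j * s) = c a + r * b a"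
      using mono that by (simp add: cb_def)
    then have "(c (a + j * s) + r * b (a + j * s)) mod r = (c a + r * b a) mod r"
      by simp
    then have "c (a + j * s) = c a" using small by simp
    with eq small show ?thesis by simp
  qed
  with a s show ?thesis by blast
qed

lemma frac_add_step: "\<exists>k::int. frac (y + t) - frac y = t - of_int k"
  by (rule exI[of _ "\<lfloor>y + t\<rfloor> - \<lfloor>y\<rfloor>"]) (simp add: frac_def)

lemma same_half_close:
  fixes u v :: real
  assumes "(frac u < 1/2) = (frac v < 1/2)"
  shows "\<bar>frac u - frac v\<bar> < 1/2"
  using assms frac_ge_0[of u] frac_lt_1[of u] frac_ge_0[of v] frac_lt_1[of v]
  unfolding abs_less_iff by (cases "frac u < 1/2") linarith+

text \<open>Key estimate: if frac(x + j*t) stays on the same side of 1/2 for all j \<le> N, then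
  N * ||t|| < 1/2.  Each step then has size < 1/2, which forces it to be t - round t, so
  the total displacement after N steps is N*(t - round t).\<close>
lemma same_half_progression_dnint:
  fixes x t :: real and N :: nat
  assumes same: "\<forall>j\<le>N. (frac (x + real j * t) < 1/2) = (frac x < 1/2)"
  shows "real N * dnint t < 1/2"
proof -
  define u where "u j = frac (x + real j * t)" for j
  have close: "\<bar>u j - u l\<bar> < 1/2" if "j \<le> N" "l \<le> N" for j l
    unfolding u_def using same that by (intro same_half_close) auto
  have step: "u (Suc j) - u j = t - of_int (round t)" if "Suc j \<le> N" for j
  proof -
    have shift: "x + real (Suc j) * t = (x + real j * t) + t" by (simp add: algebra_simps)
    obtain k :: int where k: "u (Suc j) - u j = t - of_int k"
      using frac_add_step[of "x + real j * t" t] unfolding u_def shift by blast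
    have "\<bar>t - of_int k\<bar> < 1/2" using close[of "Suc j" j] that k by simp
    then have "round t = k" by (rule round_unique')
    with k show ?thesis by simp
  qed
  have displacement: "u j - u 0 = real j * (t - of_int (round t))" if "j \<le> N" for j
    using that
  proof (induction j)
    case (Suc j)
    then show ?case using step[of j] by (simp add: algebra_simps)
  qed simp
  have "\<bar>u N - u 0\<bar> < 1/2" using close[of N 0] by simp
  then show ?thesis
    using displacement[of N] by (simp add: dnint_def abs_mult)
qed

definition half_code :: "nat \<Rightarrow> (nat \<Rightarrow> real) \<Rightarrow> nat \<Rightarrow> nat" where
  "half_code d alpha n =
     horner_sum of_bool 2 (map (\<lambda>i. frac (real n * alpha i) < 1/2) [0..<d])"

lemma half_code_bound: "half_code d alpha n < 2 ^ d"
  using horner_sum_bound[where 'a = nat] unfolding half_code_def by (metis length_map length_upt minus_nat.diff_0)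

lemma half_code_eqD:
  assumes "half_code d alpha m = half_code d alpha n" and "i < d"
  shows "(frac (real m * alpha i) < 1/2) = (frac (real n * alpha i) < 1/2)"
  using arg_cong[OF assms(1), of "\<lambda>x. bit x i"] assms(2)
  by (simp add: half_code_def bit_horner_sum_bit_iff)

lemma constant_half_code_difference:
  fixes eps :: real
  assumes s: "s \<ge> 1" and N: "1 \<le> real N * eps"
    and const: "\<forall>j\<le>N. half_code d alpha (a + j * s) = half_code d alpha a"
  shows "s \<in> bohr_nbhd d alpha eps"
proof -
  have "dnint (real s * alpha i) < eps" if i: "i < d" for i
  proof -
    have "\<forall>j\<le>N. (frac (real a * alpha i + real j * (real s * alpha i)) < 1/2)
                 = (frac (real a * alpha i) < 1/2)"
    proof (intro allI impI)
      fix j assume "j \<le> N"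
      then have "(frac (real (a + j * s) * alpha i) < 1/2) = (frac (real a * alpha i) < 1/2)"
        using half_code_eqD[OF _ i] const by blast
      then show "(frac (real a * alpha i + real j * (real s * alpha i)) < 1/2)
                 = (frac (real a * alpha i) < 1/2)"
        by (simp add: algebra_simps)
    qed
    then have small: "real N * dnint (real s * alpha i) < 1/2"
      by (rule same_half_progression_dnint)
    show ?thesis
    proof (rule ccontr)
      assume "\<not> ?thesis"
      then have "real N * eps \<le> real N * dnint (real s * alpha i)"
        by (intro mult_left_mono) auto
      with N small show False by linarith
    qed
  qed
  with s show ?thesis unfolding bohr_nbhd_def by auto
qed

theorem mainTheorem18:
  fixes S E :: "nat set" and r d :: nat
  assumes "0 \<notin> S" and "0 \<notin> E"
    and "r \<ge> 2" and "d \<ge> 1"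
    and "bohr0_dim E d"
    and "large (2 ^ d * r) S"
  shows "large r (S \<inter> E)"
  unfolding large_def
proof (intro allI impI)
  fix c :: "nat \<Rightarrow> nat" and L :: nat
  assume c: "\<forall>n\<ge>1. c n < r"
  obtain alpha eps where eps: "eps > 0" and B: "bohr_nbhd d alpha eps \<subseteq> E"
    using bohr0_dim_contains_bohr[OF assms(5)] unfolding contains_bohr_def by auto
  obtain N :: nat where N: "1 < real N * eps"
    using reals_Archimedean3[OF eps] by blast
  obtain a s where a: "a \<ge> 1" and s: "s \<in> S"
    and mono: "\<forall>j<max L (N + 1). c (a + j * s) = c a
                 \<and> half_code d alpha (a + j * s) = half_code d alpha a"
    using large_product_colouring[OF assms(6) c, of "half_code d alpha"] half_code_bound
    by blast
  have "s \<ge> 1" using s assms(1) by (cases s) auto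
  moreover have "\<forall>j\<le>N. half_code d alpha (a + j * s) = half_code d alpha a"
    using mono by simp
  ultimately have "s \<in> bohr_nbhd d alpha eps"
    using N by (intro constant_half_code_difference) auto
  with B s have "s \<in> S \<inter> E" by auto
  moreover have "\<forall>j<L. c (a + j * s) = c a" using mono by simp
  ultimately show "\<exists>a\<ge>1. \<exists>s\<in>S \<inter> E. \<forall>j<L. c (a + j * s) = c a"
    using a by blast
qed

end
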